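(* Under the standing assumptions for the $M=1$ system (see context) with $\nu_0=0$ and $\nu_1=\nu$, assume also $x_0(s)\ne0$ for $s>0$ and $s^{-\nu}y_1(s)/x_0(s)\to1$ as $s\to0^+$. Then $$s x_0'=-\eta_0x_0+s^{-\nu}y_0,\quad s y_0'=-(2\xi_0+s)s^{\nu}x_0+\eta_0y_0,\quad \eta_0'=s^{\nu}x_0^2,\quad \xi_0'=x_0y_0,$$ and moreover $$s^{\nu+1}x_0^2=2\xi_0+\eta_0-\eta_0(\eta_0-\nu),\qquad -s^{-\nu}y_0^2-(2\xi_0+s)s^{\nu}x_0^2+(2\eta_0-\nu)x_0y_0+\eta_0=0.$$
   Context: Fix complex parameters $\nu_0,\nu_1$ and put $e_1=\nu_0+\nu_1$, $e_2=\nu_0\nu_1$. Let $x_0,x_1,y_0,y_1,\xi_0,\xi_1,\eta_0,\eta_1$ be smooth complex-valued functions of $s\in(0,\infty)$ satisfying, with $'=d/ds$, the system $s x_0'=-\eta_0x_0-x_1$, $s x_1'=-\eta_1x_0+sx_0+\xi_0x_0+\xi_1x_1$, $s y_1'=-\xi_1y_1+y_0$, $s y_0'=-\xi_0y_1-sy_1+\eta_0y_0+\eta_1y_1$, $\xi_0'=x_0y_0$, $\xi_1'=x_0y_1$, $\eta_0'=x_0y_1$, $\eta_1'=x_1y_1$, together with the boundary behaviour as $s\to0^+$: $\xi_0\to e_2$, $\xi_1\to-e_1$, $\eta_0\to0$, $\eta_1\to0$, and $x_j(s)y_k(s)\to0$ for all $j,k\in\{0,1\}$. *)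

theory Defs
  imports "HOL-Analysis.Analysis"
begin

definition smooth_pos :: "(real \<Rightarrow> complex) \<Rightarrow> bool" where
  "smooth_pos f \<longleftrightarrow> (\<exists>D :: nat \<Rightarrow> real \<Rightarrow> complex. D 0 = f \<and>
      (\<forall>k. \<forall>s>0. (D k has_vector_derivative D (Suc k) s) (at s)))"

abbreviation dds :: "(real \<Rightarrow> complex) \<Rightarrow> real \<Rightarrow> complex" where
  "dds f s \<equiv> vector_derivative f (at s)"

definition M1_system ::
  "complex \<Rightarrow> complex \<Rightarrow> (real \<Rightarrow> complex) \<Rightarrow> (real \<Rightarrow> complex) \<Rightarrow> (real \<Rightarrow> complex) \<Rightarrow>
   (real \<Rightarrow> complex) \<Rightarrow> (real \<Rightarrow> complex) \<Rightarrow> (real \<Rightarrow> complex) \<Rightarrow> (real \<Rightarrow> complex) \<Rightarrow>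
   (real \<Rightarrow> complex) \<Rightarrow> bool" where
  "M1_system \<nu>0 \<nu>1 x0 x1 y0 y1 \<xi>0 \<xi>1 \<eta>0 \<eta>1 \<longleftrightarrow>
     smooth_pos x0 \<and> smooth_pos x1 \<and> smooth_pos y0 \<and> smooth_pos y1 \<and>
     smooth_pos \<xi>0 \<and> smooth_pos \<xi>1 \<and> smooth_pos \<eta>0 \<and> smooth_pos \<eta>1 \<and>
     (\<forall>s>0.
        of_real s * dds x0 s = - \<eta>0 s * x0 s - x1 s \<and>
        of_real s * dds x1 s = - \<eta>1 s * x0 s + of_real s * x0 s + \<xi>0 s * x0 s + \<xi>1 s * x1 s \<and>
        of_real s * dds y1 s = - \<xi>1 s * y1 s + y0 s \<and>
        of_real s * dds y0 s = - \<xi>0 s * y1 s - of_real s * y1 s + \<eta>0 s * y0 s + \<eta>1 s * y1 s \<and>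
        dds \<xi>0 s = x0 s * y0 s \<and>
        dds \<xi>1 s = x0 s * y1 s \<and>
        dds \<eta>0 s = x0 s * y1 s \<and>
        dds \<eta>1 s = x1 s * y1 s) \<and>
     (\<xi>0 \<longlongrightarrow> \<nu>0 * \<nu>1) (at_right 0) \<and>
     (\<xi>1 \<longlongrightarrow> - (\<nu>0 + \<nu>1)) (at_right 0) \<and>
     (\<eta>0 \<longlongrightarrow> 0) (at_right 0) \<and>
     (\<eta>1 \<longlongrightarrow> 0) (at_right 0) \<and>
     ((\<lambda>s. x0 s * y0 s) \<longlongrightarrow> 0) (at_right 0) \<and>
     ((\<lambda>s. x0 s * y1 s) \<longlongrightarrow> 0) (at_right 0) \<and>
     ((\<lambda>s. x1 s * y0 s) \<longlongrightarrow> 0) (at_right 0) \<and>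
     ((\<lambda>s. x1 s * y1 s) \<longlongrightarrow> 0) (at_right 0)"

end

theory Submission
  imports Defs
begin

text \<open>The system has several first integrals: the pairing \<open>x\<^sub>0y\<^sub>0 + x\<^sub>1y\<^sub>1\<close>,
  \<open>\<xi>\<^sub>1 - \<eta>\<^sub>0\<close>, \<open>\<xi>\<^sub>0 + \<eta>\<^sub>1\<close>, the ratio \<open>s^-(\<nu>\<^sub>0+\<nu>\<^sub>1) y\<^sub>1/x\<^sub>0\<close> (where \<open>x\<^sub>0 \<noteq> 0\<close>), a quadratic one
  involving \<open>s x\<^sub>0y\<^sub>1\<close> and, when \<open>\<nu>\<^sub>0\<nu>\<^sub>1 = 0\<close>, a second quadratic one. A function on \<open>(0,\<infinity>)\<close> with
  vanishing derivative is constant, so each of them equals its limit at \<open>0\<^sup>+\<close>, which the boundary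
  behaviour determines. For \<open>\<nu>\<^sub>0 = 0\<close> and ratio 1 this gives \<open>y\<^sub>1 = s\<^sup>\<nu> x\<^sub>0\<close> and, by the pairing,
  \<open>y\<^sub>0 = -s\<^sup>\<nu> x\<^sub>1\<close>; substituting into the system and the quadratic integrals yields the claim.\<close>

lemma first_integral_eq_limit_at_right:
  fixes F :: "real \<Rightarrow> 'a::real_normed_field"
  assumes deriv: "\<And>s. s > 0 \<Longrightarrow> (F has_vector_derivative F' s) (at s)"
    and zero: "\<And>s. s > 0 \<Longrightarrow> of_real s * F' s = 0"
    and lim: "(F \<longlongrightarrow> c) (at_right 0)"
    and "s > 0"
  shows "F s = c"
proof -
  have "(F has_vector_derivative 0) (at t within {0<..})" if "t \<in> {0<..}" for t
    using deriv[of t] zero[of t] that by (auto intro: has_vector_derivative_at_within)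
  then obtain k where k: "\<And>t. t \<in> {0<..} \<Longrightarrow> F t = k"
    using has_vector_derivative_zero_constant[of "{0<..}" F] by auto
  have "eventually (\<lambda>t. F t = k) (at_right (0::real))"
    unfolding eventually_at_right_field using k by (auto intro!: exI[of _ 1])
  then have "(F \<longlongrightarrow> k) (at_right 0)"
    by (rule tendsto_eventually)
  with lim have "k = c"
    using tendsto_unique trivial_limit_at_right_real by blast
  with k \<open>s > 0\<close> show ?thesis by simp
qed

lemma smooth_pos_has_vector_derivative:
  assumes "smooth_pos f" "s > 0"
  shows "(f has_vector_derivative dds f s) (at s)"
proof -
  obtain D where "D 0 = f" "\<forall>k. \<forall>s>0. (D k has_vector_derivative D (Suc k) s) (at s)"
    using assms(1) unfolding smooth_pos_def by blast
  with assms(2) have "(f has_vector_derivative D 1 s) (at s)"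
    by (metis One_nat_def)
  then show ?thesis
    by (simp add: vector_derivative_at)
qed

lemma of_real_powr_uminus_mult:
  "s > 0 \<Longrightarrow> (of_real s :: complex) powr (- a) * of_real s powr a = 1"
  using powr_add[of "of_real s :: complex" "- a" a] by simp

lemma of_real_powr_add_one:
  "s > 0 \<Longrightarrow> (of_real s :: complex) powr (a + 1) = of_real s * of_real s powr a"
  using powr_add[of "of_real s :: complex" a 1] by simp

lemma has_vector_derivative_of_real_powr:
  assumes "s > 0"
  shows "((\<lambda>t. (of_real t :: complex) powr a) has_vector_derivative
           a * of_real s powr a / of_real s) (at s)"
proof -
  have "(of_real s :: complex) \<notin> \<real>\<^sub>\<le>\<^sub>0"
    using assms by (auto simp: nonpos_Reals_def)
  then have "((\<lambda>t. (of_real t :: complex) powr a) has_vector_derivative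
               a * of_real s powr (a - 1)) (at s)"
    by (rule has_vector_derivative_real_field[OF has_field_derivative_powr])
  moreover have "(of_real s :: complex) powr (a - 1) = of_real s powr a / of_real s"
    using of_real_powr_add_one[OF assms, of "a - 1"] assms by (simp add: field_simps)
  ultimately show ?thesis by simp
qed

lemma has_vector_derivative_of_real_ident: "(of_real has_vector_derivative 1) (at (s::real))"
  using has_vector_derivative_of_real[OF DERIV_ident, where F = "at s"] by simp

locale M1_solution =
  fixes \<nu>0 \<nu>1 :: complex
    and x0 x1 y0 y1 \<xi>0 \<xi>1 \<eta>0 \<eta>1 :: "real \<Rightarrow> complex"
  assumes system: "M1_system \<nu>0 \<nu>1 x0 x1 y0 y1 \<xi>0 \<xi>1 \<eta>0 \<eta>1"
begin

lemma has_vector_derivatives: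
  assumes "s > 0"
  shows "(x0 has_vector_derivative dds x0 s) (at s)" "(x1 has_vector_derivative dds x1 s) (at s)"
    "(y0 has_vector_derivative dds y0 s) (at s)" "(y1 has_vector_derivative dds y1 s) (at s)"
    "(\<xi>0 has_vector_derivative dds \<xi>0 s) (at s)" "(\<xi>1 has_vector_derivative dds \<xi>1 s) (at s)"
    "(\<eta>0 has_vector_derivative dds \<eta>0 s) (at s)" "(\<eta>1 has_vector_derivative dds \<eta>1 s) (at s)"
  using system assms smooth_pos_has_vector_derivative unfolding M1_system_def by blast+

lemma equations:
  assumes "s > 0"
  shows "of_real s * dds x0 s = - \<eta>0 s * x0 s - x1 s"
    "of_real s * dds x1 s = - \<eta>1 s * x0 s + of_real s * x0 s + \<xi>0 s * x0 s + \<xi>1 s * x1 s"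
    "of_real s * dds y1 s = - \<xi>1 s * y1 s + y0 s"
    "of_real s * dds y0 s = - \<xi>0 s * y1 s - of_real s * y1 s + \<eta>0 s * y0 s + \<eta>1 s * y1 s"
    "dds \<xi>0 s = x0 s * y0 s" "dds \<xi>1 s = x0 s * y1 s"
    "dds \<eta>0 s = x0 s * y1 s" "dds \<eta>1 s = x1 s * y1 s"
  using system assms unfolding M1_system_def by auto

lemma limits:
  "(\<xi>0 \<longlongrightarrow> \<nu>0 * \<nu>1) (at_right 0)" "(\<xi>1 \<longlongrightarrow> - (\<nu>0 + \<nu>1)) (at_right 0)"
  "(\<eta>0 \<longlongrightarrow> 0) (at_right 0)" "(\<eta>1 \<longlongrightarrow> 0) (at_right 0)"
  "((\<lambda>s. x0 s * y0 s) \<longlongrightarrow> 0) (at_right 0)" "((\<lambda>s. x0 s * y1 s) \<longlongrightarrow> 0) (at_right 0)"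
  "((\<lambda>s. x1 s * y0 s) \<longlongrightarrow> 0) (at_right 0)" "((\<lambda>s. x1 s * y1 s) \<longlongrightarrow> 0) (at_right 0)"
  using system unfolding M1_system_def by auto

lemma pairing_eq_0:
  assumes "s > 0"
  shows "x0 s * y0 s + x1 s * y1 s = 0"
proof (rule first_integral_eq_limit_at_right[OF _ _ _ assms])
  fix s :: real assume s: "s > 0"
  show "((\<lambda>t. x0 t * y0 t + x1 t * y1 t) has_vector_derivative
          x0 s * dds y0 s + dds x0 s * y0 s + (x1 s * dds y1 s + dds x1 s * y1 s)) (at s)"
    by (intro derivative_intros has_vector_derivatives[OF s])
  have "of_real s * (x0 s * dds y0 s + dds x0 s * y0 s + (x1 s * dds y1 s + dds x1 s * y1 s))
      = x0 s * (of_real s * dds y0 s) + (of_real s * dds x0 s) * y0 s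
        + x1 s * (of_real s * dds y1 s) + (of_real s * dds x1 s) * y1 s"
    by (simp add: algebra_simps)
  also have "\<dots> = 0"
    unfolding equations[OF s] by (simp add: algebra_simps)
  finally show "of_real s * (x0 s * dds y0 s + dds x0 s * y0 s + (x1 s * dds y1 s + dds x1 s * y1 s)) = 0" .
next
  show "((\<lambda>t. x0 t * y0 t + x1 t * y1 t) \<longlongrightarrow> 0) (at_right 0)"
    using tendsto_add[OF limits(5,8)] by simp
qed

lemma xi1_minus_eta0:
  assumes "s > 0"
  shows "\<xi>1 s - \<eta>0 s = - (\<nu>0 + \<nu>1)"
proof (rule first_integral_eq_limit_at_right[OF _ _ _ assms])
  fix s :: real assume s: "s > 0"
  show "((\<lambda>t. \<xi>1 t - \<eta>0 t) has_vector_derivative dds \<xi>1 s - dds \<eta>0 s) (at s)"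
    by (intro derivative_intros has_vector_derivatives[OF s])
  show "of_real s * (dds \<xi>1 s - dds \<eta>0 s) = 0"
    using equations[OF s] by simp
next
  show "((\<lambda>t. \<xi>1 t - \<eta>0 t) \<longlongrightarrow> - (\<nu>0 + \<nu>1)) (at_right 0)"
    using tendsto_diff[OF limits(2,3)] by simp
qed

lemma xi0_plus_eta1:
  assumes "s > 0"
  shows "\<xi>0 s + \<eta>1 s = \<nu>0 * \<nu>1"
proof (rule first_integral_eq_limit_at_right[OF _ _ _ assms])
  fix s :: real assume s: "s > 0"
  show "((\<lambda>t. \<xi>0 t + \<eta>1 t) has_vector_derivative dds \<xi>0 s + dds \<eta>1 s) (at s)"
    by (intro derivative_intros has_vector_derivatives[OF s])
  show "of_real s * (dds \<xi>0 s + dds \<eta>1 s) = 0"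
    using equations[OF s] pairing_eq_0[OF s] by simp
next
  show "((\<lambda>t. \<xi>0 t + \<eta>1 t) \<longlongrightarrow> \<nu>0 * \<nu>1) (at_right 0)"
    using tendsto_add[OF limits(1,4)] by simp
qed

lemma y1_eq_powr_mult_x0:
  assumes nonzero: "\<forall>s>0. x0 s \<noteq> 0"
    and lim: "((\<lambda>s. of_real s powr (- (\<nu>0 + \<nu>1)) * y1 s / x0 s) \<longlongrightarrow> c) (at_right 0)"
    and "s > 0"
  shows "y1 s = c * of_real s powr (\<nu>0 + \<nu>1) * x0 s"
proof -
  define e where "e = \<nu>0 + \<nu>1"
  have "of_real s powr (- e) * y1 s / x0 s = c"
  proof (rule first_integral_eq_limit_at_right[OF _ _ lim[folded e_def] \<open>s > 0\<close>])
    fix s :: real assume s: "s > 0"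
    define P where "P = (of_real s :: complex) powr (- e)"
    define D where "D = P * y1 s * (dds x0 s * - (inverse (x0 s))\<^sup>2)
      + (P * dds y1 s + - e * P / of_real s * y1 s) * inverse (x0 s)"
    have x0s: "x0 s \<noteq> 0" using nonzero s by auto
    have "((\<lambda>t. inverse (x0 t)) has_vector_derivative dds x0 s * - (inverse (x0 s))\<^sup>2) (at s)"
      using field_vector_diff_chain_at[OF has_vector_derivatives(1)[OF s] DERIV_inverse[OF x0s]]
      by (simp add: o_def power2_eq_square)
    then have "((\<lambda>t. of_real t powr (- e) * y1 t * inverse (x0 t)) has_vector_derivative D) (at s)"
      unfolding D_def P_def
      by (intro has_vector_derivative_mult has_vector_derivative_of_real_powr s has_vector_derivatives)
    then show "((\<lambda>t. of_real t powr (- e) * y1 t / x0 t) has_vector_derivative D) (at s)"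
      by (simp add: divide_inverse)
    have "of_real s * (x0 s)\<^sup>2 * D
        = P * (- y1 s * (of_real s * dds x0 s) + x0 s * (of_real s * dds y1 s) - e * y1 s * x0 s)"
      unfolding D_def using x0s s by (simp add: field_simps power2_eq_square)
    also have "\<dots> = P * (x0 s * y0 s + x1 s * y1 s + x0 s * y1 s * (\<eta>0 s - \<xi>1 s - e))"
      unfolding equations[OF s] by (simp add: algebra_simps)
    also have "\<dots> = 0"
      using pairing_eq_0[OF s] xi1_minus_eta0[OF s] by (simp add: e_def algebra_simps)
    finally show "of_real s * D = 0"
      using x0s by simp
  qed
  then have ratio: "of_real s powr (- e) * y1 s = c * x0 s"
    using nonzero \<open>s > 0\<close> by (simp add: field_simps)
  have "y1 s = of_real s powr e * (of_real s powr (- e) * y1 s)"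
    using of_real_powr_uminus_mult[OF \<open>s > 0\<close>, of e] by (simp add: algebra_simps)
  also have "\<dots> = c * of_real s powr (\<nu>0 + \<nu>1) * x0 s"
    unfolding ratio by (simp add: e_def algebra_simps)
  finally show ?thesis .
qed

lemma quadratic_integral_x0_y1:
  assumes "s > 0"
  shows "of_real s * x0 s * y1 s = 2 * (\<xi>0 s - \<nu>0 * \<nu>1) + \<eta>0 s - \<eta>0 s * (\<eta>0 s - (\<nu>0 + \<nu>1))"
proof -
  define e where "e = \<nu>0 + \<nu>1"
  define F where "F t = of_real t * x0 t * y1 t - 2 * \<xi>0 t - \<eta>0 t + \<eta>0 t * (\<eta>0 t - e)" for t
  have "F s = - 2 * (\<nu>0 * \<nu>1)"
  proof (rule first_integral_eq_limit_at_right[OF _ _ _ assms])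
    fix s :: real assume s: "s > 0"
    define D where "D = of_real s * x0 s * dds y1 s + (of_real s * dds x0 s + 1 * x0 s) * y1 s
      - 2 * dds \<xi>0 s - dds \<eta>0 s + (\<eta>0 s * (dds \<eta>0 s - 0) + dds \<eta>0 s * (\<eta>0 s - e))"
    show "(F has_vector_derivative D) (at s)"
      unfolding F_def[abs_def] D_def
      by (intro derivative_intros has_vector_derivatives[OF s] has_vector_derivative_of_real_ident)
    have "D = x0 s * (of_real s * dds y1 s) + (of_real s * dds x0 s) * y1 s + x0 s * y1 s
        - 2 * dds \<xi>0 s + (2 * \<eta>0 s - 1 - e) * dds \<eta>0 s"
      unfolding D_def by (simp add: algebra_simps)
    also have "\<dots> = - (x0 s * y0 s + x1 s * y1 s) + x0 s * y1 s * (\<eta>0 s - \<xi>1 s - e)"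
      unfolding equations[OF s] by (simp add: algebra_simps)
    also have "\<dots> = 0"
      using pairing_eq_0[OF s] xi1_minus_eta0[OF s] by (simp add: e_def algebra_simps)
    finally show "of_real s * D = 0" by simp
  next
    have "((\<lambda>t. of_real t * (x0 t * y1 t)) \<longlongrightarrow> of_real 0 * 0) (at_right 0)"
      by (intro tendsto_mult limits tendsto_of_real tendsto_ident_at)
    then have "(F \<longlongrightarrow> 0 - 2 * (\<nu>0 * \<nu>1) - 0 + 0 * (0 - e)) (at_right 0)"
      unfolding F_def[abs_def] by (intro tendsto_intros limits) (simp add: mult.assoc)
    then show "(F \<longlongrightarrow> - 2 * (\<nu>0 * \<nu>1)) (at_right 0)" by simp
  qed
  then show ?thesis
    unfolding F_def e_def by (simp add: algebra_simps)
qed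

text \<open>Without \<open>\<nu>\<^sub>0\<nu>\<^sub>1 = 0\<close> the derivative of the left-hand side is \<open>\<nu>\<^sub>0\<nu>\<^sub>1(x\<^sub>1y\<^sub>1 - x\<^sub>0y\<^sub>0)/s\<close>.\<close>

lemma quadratic_integral_x1_y0:
  assumes "\<nu>0 * \<nu>1 = 0" and "s > 0"
  shows "x1 s * y0 s - (2 * \<xi>0 s + of_real s) * (x0 s * y1 s)
           + (2 * \<eta>0 s - (\<nu>0 + \<nu>1)) * (x0 s * y0 s) + \<eta>0 s = 0"
proof -
  define e where "e = \<nu>0 + \<nu>1"
  define G where "G t = x1 t * y0 t - (2 * \<xi>0 t + of_real t) * (x0 t * y1 t)
    + (2 * \<eta>0 t - e) * (x0 t * y0 t) + \<eta>0 t" for t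
  have "G s = 0"
  proof (rule first_integral_eq_limit_at_right[OF _ _ _ \<open>s > 0\<close>])
    fix s :: real assume s: "s > 0"
    define D where "D = x1 s * dds y0 s + dds x1 s * y0 s
      - ((2 * \<xi>0 s + of_real s) * (x0 s * dds y1 s + dds x0 s * y1 s) + (2 * dds \<xi>0 s + 1) * (x0 s * y1 s))
      + ((2 * \<eta>0 s - e) * (x0 s * dds y0 s + dds x0 s * y0 s) + (2 * dds \<eta>0 s - 0) * (x0 s * y0 s))
      + dds \<eta>0 s"
    show "(G has_vector_derivative D) (at s)"
      unfolding G_def[abs_def] D_def
      by (intro derivative_intros has_vector_derivatives[OF s] has_vector_derivative_of_real_ident)
    have \<eta>1: "\<eta>1 s = - \<xi>0 s"
      using xi0_plus_eta1[OF s] assms(1) by (simp add: add_eq_0_iff)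
    have \<xi>1: "\<xi>1 s = \<eta>0 s - e"
      using xi1_minus_eta0[OF s] by (simp add: e_def algebra_simps)
    have "of_real s * D = x1 s * (of_real s * dds y0 s) + (of_real s * dds x1 s) * y0 s
        - ((2 * \<xi>0 s + of_real s) * (x0 s * (of_real s * dds y1 s) + (of_real s * dds x0 s) * y1 s)
            + of_real s * (2 * dds \<xi>0 s + 1) * (x0 s * y1 s))
        + ((2 * \<eta>0 s - e) * (x0 s * (of_real s * dds y0 s) + (of_real s * dds x0 s) * y0 s)
            + of_real s * (2 * dds \<eta>0 s) * (x0 s * y0 s))
        + of_real s * dds \<eta>0 s"
      unfolding D_def by (simp add: algebra_simps)
    also have "\<dots> = 0"
      unfolding equations[OF s] \<eta>1 \<xi>1 by (simp add: algebra_simps)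
    finally show "of_real s * D = 0" .
  next
    have "(G \<longlongrightarrow> 0 - (2 * (\<nu>0 * \<nu>1) + of_real 0) * 0 + (2 * 0 - e) * 0 + 0) (at_right 0)"
      unfolding G_def[abs_def] by (intro tendsto_intros limits tendsto_ident_at)
    then show "(G \<longlongrightarrow> 0) (at_right 0)" by simp
  qed
  then show ?thesis
    unfolding G_def e_def .
qed

end

theorem mainTheorem4:
  fixes \<nu> :: complex
    and x0 x1 y0 y1 \<xi>0 \<xi>1 \<eta>0 \<eta>1 :: "real \<Rightarrow> complex"
  assumes sys: "M1_system 0 \<nu> x0 x1 y0 y1 \<xi>0 \<xi>1 \<eta>0 \<eta>1"
    and nz: "\<forall>s>0. x0 s \<noteq> 0"
    and lim: "((\<lambda>s. of_real s powr (- \<nu>) * y1 s / x0 s) \<longlongrightarrow> 1) (at_right 0)"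
  shows "\<forall>s>0.
      of_real s * dds x0 s = - \<eta>0 s * x0 s + of_real s powr (- \<nu>) * y0 s \<and>
      of_real s * dds y0 s = - (2 * \<xi>0 s + of_real s) * of_real s powr \<nu> * x0 s + \<eta>0 s * y0 s \<and>
      dds \<eta>0 s = of_real s powr \<nu> * (x0 s)\<^sup>2 \<and>
      dds \<xi>0 s = x0 s * y0 s \<and>
      of_real s powr (\<nu> + 1) * (x0 s)\<^sup>2 = 2 * \<xi>0 s + \<eta>0 s - \<eta>0 s * (\<eta>0 s - \<nu>) \<and>
      - (of_real s powr (- \<nu>)) * (y0 s)\<^sup>2 - (2 * \<xi>0 s + of_real s) * of_real s powr \<nu> * (x0 s)\<^sup>2
        + (2 * \<eta>0 s - \<nu>) * x0 s * y0 s + \<eta>0 s = 0"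
proof -
  interpret M1_solution 0 \<nu> x0 x1 y0 y1 \<xi>0 \<xi>1 \<eta>0 \<eta>1
    by (rule M1_solution.intro[OF sys])
  have y1: "y1 s = of_real s powr \<nu> * x0 s" if s: "s > 0" for s
    using y1_eq_powr_mult_x0[of 1 s] nz lim s by simp
  have x1: "x1 s = - (of_real s powr (- \<nu>)) * y0 s" if s: "s > 0" for s
  proof -
    have "x0 s * (y0 s + of_real s powr \<nu> * x1 s) = 0"
      using pairing_eq_0[OF s] unfolding y1[OF s] by (simp add: algebra_simps)
    then have "y0 s = - (of_real s powr \<nu>) * x1 s"
      using nz s by (simp add: add_eq_0_iff)
    then show ?thesis
      using of_real_powr_uminus_mult[OF s, of \<nu>] by (simp add: algebra_simps)
  qed
  have \<eta>1: "\<eta>1 s = - \<xi>0 s" if "s > 0" for s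
    using xi0_plus_eta1[OF that] by (simp add: add_eq_0_iff)
  show ?thesis
    apply (intro allI impI)
    subgoal for s
      using equations[of s] quadratic_integral_x0_y1[of s] quadratic_integral_x1_y0[of s]
        of_real_powr_add_one[of s \<nu>]
      by (simp add: x1 y1 \<eta>1 algebra_simps power2_eq_square)
    done
qed

end
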